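(* Let $N\in\mathbb{N}$, $\lambda$ a partition of length $\le N$ (extended by zeros, $\lambda_j=0$ for $j$ beyond its length), and $x=(x_1,\ldots,x_N)$. Then \[ \operatorname{s}_\lambda(x)=\det\Bigl[\hom_{\lambda_j-j+k}(x_k,x_{k+1},\ldots,x_N)\Bigr]_{j,k=1}^N. \]
   Context: $\operatorname{s}_\lambda$ is the Schur polynomial; $\hom_m$ is the complete homogeneous symmetric polynomial of degree $m$, with $\hom_0=1$ and $\hom_m=0$ for $m<0$. *)

theory Defs
  imports "HOL-Library.Multiset" "Jordan_Normal_Form.Determinant"
begin

definition is_partition :: "nat list \<Rightarrow> bool" where
  "is_partition lam \<longleftrightarrow> sorted (rev lam) \<and> 0 \<notin> set lam"

definition part :: "nat list \<Rightarrow> nat \<Rightarrow> nat" where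
  "part lam j = (if 1 \<le> j \<and> j \<le> length lam then lam ! (j - 1) else 0)"

text \<open>Complete homogeneous symmetric polynomial of degree m in the variables
  x_i, i in S, evaluated: sum over multisets of size m drawn from S.
  h_m = 0 for m < 0, h_0 = 1.\<close>
definition hom :: "int \<Rightarrow> nat set \<Rightarrow> (nat \<Rightarrow> 'a::comm_ring_1) \<Rightarrow> 'a" where
  "hom m S x = (if m < 0 then 0 else
     (\<Sum>M\<in>{M. set_mset M \<subseteq> S \<and> size M = nat m}. \<Prod>\<^sub># (image_mset x M)))"

definition cells :: "nat list \<Rightarrow> (nat \<times> nat) set" where
  "cells lam = {(i, j). 1 \<le> i \<and> i \<le> length lam \<and> 1 \<le> j \<and> j \<le> part lam i}"

definition ssyt :: "nat list \<Rightarrow> nat \<Rightarrow> (nat \<times> nat \<Rightarrow> nat) set" where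
  "ssyt lam N = {T.
     (\<forall>c. c \<notin> cells lam \<longrightarrow> T c = 0) \<and>
     (\<forall>c\<in>cells lam. T c \<in> {1..N}) \<and>
     (\<forall>i j. (i, j) \<in> cells lam \<and> (i, Suc j) \<in> cells lam \<longrightarrow> T (i, j) \<le> T (i, Suc j)) \<and>
     (\<forall>i j. (i, j) \<in> cells lam \<and> (Suc i, j) \<in> cells lam \<longrightarrow> T (i, j) < T (Suc i, j))}"

definition schur :: "nat list \<Rightarrow> nat \<Rightarrow> (nat \<Rightarrow> 'a::comm_ring_1) \<Rightarrow> 'a" where
  "schur lam N x = (\<Sum>T\<in>ssyt lam N. \<Prod>c\<in>cells lam. x (T c))"

end

theory Submission
  imports Defs "HOL-Library.Disjoint_Sets" "HOL-Library.FuncSet"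
begin

text \<open>Induction on the number \<open>N\<close> of variables, comparing how both sides change when the
  variable \<open>x\<^sub>N\<^sub>+\<^sub>1\<close> is added.
  In a semistandard tableau with entries \<open>\<le> N + 1\<close> the entries \<open>N + 1\<close> form a horizontal
  strip, so \<open>s\<^sub>p(x\<^sub>1,\<dots>,x\<^sub>N\<^sub>+\<^sub>1)\<close> is the sum of \<open>x\<^sub>N\<^sub>+\<^sub>1\<^sup>|\<^sup>p\<^sup>|\<^sup>-\<^sup>|\<^sup>q\<^sup>| s\<^sub>q(x\<^sub>1,\<dots>,x\<^sub>N)\<close>
  over the shapes \<open>q\<close> interlacing \<open>p\<close>, and \<open>s\<^sub>q\<close> vanishes if \<open>q\<close> has \<open>N + 1\<close> rows.
  On the determinant side, \<open>h\<^sub>m(x\<^sub>k,\<dots>,x\<^sub>N\<^sub>+\<^sub>1) = \<Sum>\<^sub>r x\<^sub>N\<^sub>+\<^sub>1\<^sup>r h\<^sub>m\<^sub>-\<^sub>r(x\<^sub>k,\<dots>,x\<^sub>N)\<close>; expanding every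
  row by multilinearity gives a sum over row shifts \<open>\<mu>\<close> of determinants in \<open>x\<^sub>1,\<dots>,x\<^sub>N\<close>.
  Exchanging the two rows at the first place where \<open>\<mu>\<close> fails to interlace \<open>p\<close> is a
  weight-preserving involution that flips the sign of the determinant, so only interlacing
  shifts survive; for those the last column of the matrix is a unit vector (or zero), and
  Laplace expansion leaves the \<open>N \<times> N\<close> determinant of the interlacing shape.\<close>

lemma hom_empty: "hom m {} x = (if m = 0 then 1 else 0)"
proof -
  have "{M :: nat multiset. M = {#} \<and> size M = n} = (if n = 0 then {{#}} else {})" for n
    by auto
  then show ?thesis
    unfolding hom_def by auto
qed

lemma hom_negative: "m < 0 \<Longrightarrow> hom m S x = 0"
  unfolding hom_def by simp

lemma sum_prod_mset_multisets_of_size_insert: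
  fixes x :: "'b \<Rightarrow> 'a::comm_semiring_1"
  assumes S: "finite S" and a: "a \<notin> S"
  shows "(\<Sum>M\<in>multisets_of_size (insert a S) m. \<Prod>\<^sub># (image_mset x M)) =
    (\<Sum>r\<le>m. x a ^ r * (\<Sum>M\<in>multisets_of_size S (m - r). \<Prod>\<^sub># (image_mset x M)))"
proof -
  have "(\<Sum>r\<le>m. x a ^ r * (\<Sum>M\<in>multisets_of_size S (m - r). \<Prod>\<^sub># (image_mset x M)))
     = (\<Sum>r\<le>m. \<Sum>M\<in>multisets_of_size S (m - r). x a ^ r * \<Prod>\<^sub># (image_mset x M))"
    by (simp add: sum_distrib_left)
  also have "\<dots> = (\<Sum>(r, M)\<in>Sigma {..m} (\<lambda>r. multisets_of_size S (m - r)). x a ^ r * \<Prod>\<^sub># (image_mset x M))"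
    by (rule sum.Sigma) (use S in auto)
  also have "\<dots> = (\<Sum>M\<in>multisets_of_size (insert a S) m. \<Prod>\<^sub># (image_mset x M))"
  proof (rule sum.reindex_bij_witness[where i = "\<lambda>M. (count M a, filter_mset (\<lambda>y. y \<noteq> a) M)"
        and j = "\<lambda>(r, M). replicate_mset r a + M"])
    fix M assume M: "M \<in> multisets_of_size (insert a S) m"
    show "(case (count M a, filter_mset (\<lambda>y. y \<noteq> a) M) of (r, M) \<Rightarrow> replicate_mset r a + M) = M"
      by (simp add: multiset_eq_iff)
    have "M = replicate_mset (count M a) a + filter_mset (\<lambda>y. y \<noteq> a) M"
      by (simp add: multiset_eq_iff)
    then have "size M = count M a + size (filter_mset (\<lambda>y. y \<noteq> a) M)"
      by (metis size_replicate_mset size_union)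
    then show "(count M a, filter_mset (\<lambda>y. y \<noteq> a) M) \<in> Sigma {..m} (\<lambda>r. multisets_of_size S (m - r))"
      using M by (auto simp: multisets_of_size_def)
  next
    fix rM assume rM: "rM \<in> Sigma {..m} (\<lambda>r. multisets_of_size S (m - r))"
    obtain r M where [simp]: "rM = (r, M)" by fastforce
    from rM have r: "r \<le> m" and MS: "set_mset M \<subseteq> S" and sM: "size M = m - r"
      by (auto simp: multisets_of_size_def)
    have "count M a = 0" using MS a by (meson count_eq_zero_iff subsetD)
    then show "(count (case rM of (r, M) \<Rightarrow> replicate_mset r a + M) a,
        filter_mset (\<lambda>y. y \<noteq> a) (case rM of (r, M) \<Rightarrow> replicate_mset r a + M)) = rM"
      by (auto simp: multiset_eq_iff)
    show "(case rM of (r, M) \<Rightarrow> replicate_mset r a + M) \<in> multisets_of_size (insert a S) m"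
      using MS sM r by (auto simp: multisets_of_size_def)
    show "\<Prod>\<^sub># (image_mset x (case rM of (r, M) \<Rightarrow> replicate_mset r a + M)) =
      (case rM of (r, M) \<Rightarrow> x a ^ r * \<Prod>\<^sub># (image_mset x M))"
      by simp
  qed
  finally show ?thesis ..
qed

text \<open>Any upper bound \<open>e \<ge> d\<close> may be used for the powers of the new variable, since
  \<open>hom\<close> vanishes in negative degree.\<close>
lemma hom_insert:
  assumes S: "finite S" and a: "a \<notin> S" and de: "d \<le> e"
  shows "hom d (insert a S) x = (\<Sum>r\<in>{0..e}. x a ^ nat r * hom (d - r) S x)"
proof (cases "d < 0")
  case True
  then show ?thesis by (auto simp: hom_negative intro!: sum.neutral)
next
  case False
  then obtain m where dm: "d = int m"
    by (metis nonneg_int_cases not_less)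
  have "(\<Sum>r\<in>{0..e}. x a ^ nat r * hom (d - r) S x) = (\<Sum>r\<in>{0..d}. x a ^ nat r * hom (d - r) S x)"
    by (rule sum.mono_neutral_right) (use de in \<open>auto simp: hom_negative\<close>)
  also have "{0..d} = int ` {..m}"
    unfolding dm by (auto simp: image_iff intro!: bexI[where x = "nat _"])
  also have "(\<Sum>r\<in>int ` {..m}. x a ^ nat r * hom (d - r) S x)
      = (\<Sum>r\<le>m. x a ^ r * (\<Sum>M\<in>multisets_of_size S (m - r). \<Prod>\<^sub># (image_mset x M)))"
    by (subst sum.reindex)
       (auto simp: dm hom_def multisets_of_size_def of_nat_diff nat_diff_distrib intro!: sum.cong)
  also have "\<dots> = hom d (insert a S) x"
    using sum_prod_mset_multisets_of_size_insert[OF S a, of x m]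
    by (simp add: hom_def multisets_of_size_def dm)
  finally show ?thesis ..
qed

lemma det_mat_sum_rows:
  fixes g :: "nat \<Rightarrow> 'b \<Rightarrow> nat \<Rightarrow> 'a::comm_ring_1" and c :: "nat \<Rightarrow> 'b \<Rightarrow> 'a"
  assumes fin: "\<And>i. i < n \<Longrightarrow> finite (R i)"
  shows "det (mat n n (\<lambda>(i, j). \<Sum>r\<in>R i. c i r * g i r j)) =
    (\<Sum>k\<in>PiE {0..<n} R. (\<Prod>i\<in>{0..<n}. c i (k i)) * det (mat n n (\<lambda>(i, j). g i (k i) j)))"
proof -
  let ?P = "{p. p permutes {0..<n}}"
  have pin: "\<And>p i. p \<in> ?P \<Longrightarrow> i \<in> {0..<n} \<Longrightarrow> p i < n"
    by (auto dest: permutes_in_image)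
  have "det (mat n n (\<lambda>(i, j). \<Sum>r\<in>R i. c i r * g i r j)) =
     (\<Sum>p\<in>?P. signof p * (\<Prod>i\<in>{0..<n}. \<Sum>r\<in>R i. c i r * g i r (p i)))"
    by (subst det_def'[of _ n]) (auto intro!: sum.cong prod.cong simp: pin)
  also have "\<dots> = (\<Sum>p\<in>?P. signof p * (\<Sum>k\<in>PiE {0..<n} R. \<Prod>i\<in>{0..<n}. c i (k i) * g i (k i) (p i)))"
    by (subst prod_sum_PiE) (auto simp: fin)
  also have "\<dots> = (\<Sum>k\<in>PiE {0..<n} R. \<Sum>p\<in>?P.
      (\<Prod>i\<in>{0..<n}. c i (k i)) * (signof p * (\<Prod>i\<in>{0..<n}. g i (k i) (p i))))"
    by (subst sum.swap) (simp add: sum_distrib_left prod.distrib mult_ac)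
  also have "\<dots> = (\<Sum>k\<in>PiE {0..<n} R. (\<Prod>i\<in>{0..<n}. c i (k i)) * det (mat n n (\<lambda>(i, j). g i (k i) j)))"
    by (intro sum.cong refl, subst det_def'[of _ n])
       (auto simp: sum_distrib_left pin intro!: sum.cong prod.cong)
  finally show ?thesis .
qed

lemma det_last_column_zero_above:
  fixes A :: "'a::comm_ring_1 mat"
  assumes A: "A \<in> carrier_mat (Suc n) (Suc n)" and zero: "\<And>i. i < n \<Longrightarrow> A $$ (i, n) = 0"
  shows "det A = A $$ (n, n) * det (mat_delete A n n)"
proof -
  have "det A = (\<Sum>i<Suc n. A $$ (i, n) * cofactor A i n)"
    by (rule laplace_expansion_column[OF A]) simp
  also have "\<dots> = A $$ (n, n) * cofactor A n n"
    using zero by simp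
  also have "cofactor A n n = det (mat_delete A n n)"
    by (simp add: cofactor_def mult_2[symmetric] power_mult)
  finally show ?thesis .
qed

text \<open>Rows and columns are 0-based; row \<open>j\<close> carries the degree index \<open>mu j\<close> in place of the
  part \<open>\<lambda>\<^sub>j\<^sub>+\<^sub>1\<close>, and the matrix size \<open>n\<close> is decoupled from the number \<open>N\<close> of variables.\<close>
definition hom_mat :: "nat \<Rightarrow> nat \<Rightarrow> (nat \<Rightarrow> int) \<Rightarrow> (nat \<Rightarrow> 'a::comm_ring_1) \<Rightarrow> 'a mat" where
  "hom_mat n N mu x = mat n n (\<lambda>(j, k). hom (mu j - int (j + 1) + int (k + 1)) {k + 1..N} x)"

lemma hom_mat_cong: "(\<And>j. j < n \<Longrightarrow> mu j = nu j) \<Longrightarrow> hom_mat n N mu x = hom_mat n N nu x"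
  unfolding hom_mat_def by (rule eq_matI) auto

lemma det_hom_mat_last_column:
  "det (hom_mat (Suc N) N (\<lambda>j. int (q (j + 1))) x) =
    (if q (Suc N) = 0 then det (hom_mat N N (\<lambda>j. int (q (j + 1))) x) else 0)"
proof -
  let ?A = "hom_mat (Suc N) N (\<lambda>j. int (q (j + 1))) x"
  have "det ?A = ?A $$ (N, N) * det (mat_delete ?A N N)"
    by (rule det_last_column_zero_above) (auto simp: hom_mat_def hom_empty)
  moreover have "mat_delete ?A N N = hom_mat N N (\<lambda>j. int (q (j + 1))) x"
    by (rule eq_matI) (auto simp: mat_delete_def hom_mat_def)
  ultimately show ?thesis
    by (simp add: hom_mat_def hom_empty)
qed

text \<open>Below \<open>j - N\<close> every entry of row \<open>j\<close> of \<open>hom_mat (Suc N) N mu x\<close> has negative degree.\<close>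
definition row_degrees :: "nat \<Rightarrow> (nat \<Rightarrow> nat) \<Rightarrow> nat \<Rightarrow> int set" where
  "row_degrees N p j = {int (j + 1) - int (Suc N)..int (p (j + 1))}"

lemma finite_row_degrees [simp]: "finite (row_degrees N p j)"
  by (simp add: row_degrees_def)

definition shift_weight :: "nat \<Rightarrow> (nat \<Rightarrow> nat) \<Rightarrow> (nat \<Rightarrow> 'a::comm_ring_1) \<Rightarrow> (nat \<Rightarrow> int) \<Rightarrow> 'a" where
  "shift_weight N p x mu = (\<Prod>j\<in>{0..<Suc N}. x (Suc N) ^ nat (int (p (j + 1)) - mu j))"

lemma hom_atLeastAtMost_Suc:
  assumes "k \<le> N"
  shows "hom (a - int (j + 1) + int (k + 1)) {k + 1..Suc N} x =
    (\<Sum>m\<in>{int (j + 1) - int (Suc N)..a}.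
       x (Suc N) ^ nat (a - m) * hom (m - int (j + 1) + int (k + 1)) {k + 1..N} x)"
proof -
  have "{k + 1..Suc N} = insert (Suc N) {k + 1..N}"
    using assms by auto
  then have "hom (a - int (j + 1) + int (k + 1)) {k + 1..Suc N} x =
     (\<Sum>r\<in>{0..a - int (j + 1) + int (Suc N)}.
        x (Suc N) ^ nat r * hom (a - int (j + 1) + int (k + 1) - r) {k + 1..N} x)"
    using assms by (simp add: hom_insert)
  also have "\<dots> = (\<Sum>m\<in>{int (j + 1) - int (Suc N)..a}.
       x (Suc N) ^ nat (a - m) * hom (m - int (j + 1) + int (k + 1)) {k + 1..N} x)"
    by (rule sum.reindex_bij_witness[where i = "\<lambda>m. a - m" and j = "\<lambda>r. a - r"])
       (auto simp: algebra_simps)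
  finally show ?thesis .
qed

lemma det_hom_mat_Suc:
  "det (hom_mat (Suc N) (Suc N) (\<lambda>j. int (p (j + 1))) x) =
    (\<Sum>mu\<in>PiE {0..<Suc N} (row_degrees N p). shift_weight N p x mu * det (hom_mat (Suc N) N mu x))"
proof -
  have "hom_mat (Suc N) (Suc N) (\<lambda>j. int (p (j + 1))) x =
      mat (Suc N) (Suc N) (\<lambda>(j, k). \<Sum>m\<in>row_degrees N p j.
        x (Suc N) ^ nat (int (p (j + 1)) - m) * hom (m - int (j + 1) + int (k + 1)) {k + 1..N} x)"
    unfolding hom_mat_def row_degrees_def
    by (rule cong_mat) (auto simp only: case_prod_conv intro: hom_atLeastAtMost_Suc)
  then show ?thesis
    by (simp add: det_mat_sum_rows shift_weight_def hom_mat_def)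
qed

definition fails_interlacing :: "nat \<Rightarrow> (nat \<Rightarrow> nat) \<Rightarrow> (nat \<Rightarrow> int) \<Rightarrow> nat \<Rightarrow> bool" where
  "fails_interlacing N p mu i \<longleftrightarrow> i < N \<and> mu i < int (p (Suc (Suc i)))"

definition first_failure :: "nat \<Rightarrow> (nat \<Rightarrow> nat) \<Rightarrow> (nat \<Rightarrow> int) \<Rightarrow> nat" where
  "first_failure N p mu = (LEAST i. fails_interlacing N p mu i)"

text \<open>Exchanging rows \<open>k\<close> and \<open>k + 1\<close> of \<open>hom_mat\<close> turns their degree indices
  \<open>(mu k, mu (k + 1))\<close> into \<open>(mu (k + 1) - 1, mu k + 1)\<close>.\<close>
definition exchange_rows :: "nat \<Rightarrow> (nat \<Rightarrow> nat) \<Rightarrow> (nat \<Rightarrow> int) \<Rightarrow> nat \<Rightarrow> int" where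
  "exchange_rows N p mu = (let k = first_failure N p mu in mu(k := mu (Suc k) - 1, Suc k := mu k + 1))"

lemma first_failure:
  assumes "\<exists>i. fails_interlacing N p mu i"
  shows "fails_interlacing N p mu (first_failure N p mu)" "first_failure N p mu < N"
    "\<And>i. i < first_failure N p mu \<Longrightarrow> \<not> fails_interlacing N p mu i"
proof -
  show "fails_interlacing N p mu (first_failure N p mu)"
    using assms unfolding first_failure_def by (rule LeastI_ex)
  then show "first_failure N p mu < N"
    by (simp add: fails_interlacing_def)
  show "\<And>i. i < first_failure N p mu \<Longrightarrow> \<not> fails_interlacing N p mu i"
    unfolding first_failure_def by (rule not_less_Least)
qed

lemma exchange_rows_apply:
  "exchange_rows N p mu (first_failure N p mu) = mu (Suc (first_failure N p mu)) - 1"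
  "exchange_rows N p mu (Suc (first_failure N p mu)) = mu (first_failure N p mu) + 1"
  "i \<noteq> first_failure N p mu \<Longrightarrow> i \<noteq> Suc (first_failure N p mu) \<Longrightarrow> exchange_rows N p mu i = mu i"
  unfolding exchange_rows_def Let_def by auto

context
  fixes N p mu
  assumes fails: "\<exists>i. fails_interlacing N p mu i"
    and mu: "mu \<in> PiE {0..<Suc N} (row_degrees N p)"
begin

lemma row_degrees_first_failure:
  "int (first_failure N p mu) - int N \<le> mu (first_failure N p mu)"
  "int (first_failure N p mu) - int N < mu (Suc (first_failure N p mu))"
  "mu (Suc (first_failure N p mu)) \<le> int (p (Suc (Suc (first_failure N p mu))))"
proof -
  have "mu (first_failure N p mu) \<in> row_degrees N p (first_failure N p mu)"
    "mu (Suc (first_failure N p mu)) \<in> row_degrees N p (Suc (first_failure N p mu))"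
    using mu first_failure(2)[OF fails] by (auto simp: PiE_iff)
  then show "int (first_failure N p mu) - int N \<le> mu (first_failure N p mu)"
    "int (first_failure N p mu) - int N < mu (Suc (first_failure N p mu))"
    "mu (Suc (first_failure N p mu)) \<le> int (p (Suc (Suc (first_failure N p mu))))"
    by (auto simp: row_degrees_def)
qed

lemma fails_interlacing_exchange_rows:
  "fails_interlacing N p (exchange_rows N p mu) (first_failure N p mu)"
proof -
  let ?k = "first_failure N p mu"
  have "mu (Suc ?k) \<le> int (p (Suc (Suc ?k)))"
    by (rule row_degrees_first_failure(3))
  then show ?thesis
    using first_failure(2)[OF fails] by (simp add: fails_interlacing_def exchange_rows_apply)
qed

lemma first_failure_exchange_rows: "first_failure N p (exchange_rows N p mu) = first_failure N p mu"
proof -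
  have "\<not> fails_interlacing N p (exchange_rows N p mu) i" if "i < first_failure N p mu" for i
    using first_failure(3)[OF fails that] that by (simp add: fails_interlacing_def exchange_rows_apply)
  then show ?thesis
    using fails_interlacing_exchange_rows unfolding first_failure_def[of N p "exchange_rows N p mu"]
    by (intro Least_equality) (auto simp: not_less[symmetric] first_failure_def)
qed

lemma exchange_rows_involution: "exchange_rows N p (exchange_rows N p mu) = mu"
  using first_failure_exchange_rows
  unfolding exchange_rows_def[of N p "exchange_rows N p mu"]
  by (auto simp: Let_def exchange_rows_apply fun_eq_iff)

lemma exchange_rows_row_degrees:
  assumes antitone: "\<And>j. j \<ge> 1 \<Longrightarrow> p (Suc j) \<le> p j"
  shows "exchange_rows N p mu \<in> PiE {0..<Suc N} (row_degrees N p)"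
proof -
  let ?k = "first_failure N p mu"
  have k: "?k < N" "fails_interlacing N p mu ?k"
    using first_failure[OF fails] by auto
  have "exchange_rows N p mu i \<in> row_degrees N p i" if i: "i < Suc N" for i
  proof -
    consider "i = ?k" | "i = Suc ?k" | "i \<noteq> ?k" "i \<noteq> Suc ?k"
      by blast
    then show ?thesis
    proof cases
      case 1
      then show ?thesis
        using row_degrees_first_failure(2,3) antitone[of "Suc ?k"] k
        by (simp add: exchange_rows_apply row_degrees_def)
    next
      case 2
      then show ?thesis
        using row_degrees_first_failure(1) k by (simp add: exchange_rows_apply row_degrees_def fails_interlacing_def)
    next
      case 3
      then show ?thesis
        using mu i by (auto simp: exchange_rows_apply PiE_iff)
    qed
  qed
  moreover have "exchange_rows N p mu \<in> extensional {0..<Suc N}"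
    using mu k by (auto simp: exchange_rows_def Let_def extensional_def PiE_iff)
  ultimately show ?thesis
    by (auto simp: PiE_iff)
qed

lemma shift_weight_exchange_rows:
  assumes antitone: "\<And>j. j \<ge> 1 \<Longrightarrow> p (Suc j) \<le> p j"
  shows "shift_weight N p x (exchange_rows N p mu) = shift_weight N p x mu"
proof -
  let ?k = "first_failure N p mu" and ?y = "x (Suc N)"
  let ?w = "\<lambda>nu j. ?y ^ nat (int (p (j + 1)) - nu j)"
  have k: "?k < N" "fails_interlacing N p mu ?k"
    using first_failure[OF fails] by auto
  define R where "R = {0..<Suc N} - {?k, Suc ?k}"
  have R: "{0..<Suc N} = insert ?k (insert (Suc ?k) R)"
    using k by (auto simp: R_def)
  have split: "prod f {0..<Suc N} = f ?k * f (Suc ?k) * prod f R" for f :: "nat \<Rightarrow> 'a"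
    by (subst R) (simp add: R_def mult.assoc)
  have "nat (int (p (?k + 1)) - exchange_rows N p mu ?k)
        + nat (int (p (Suc ?k + 1)) - exchange_rows N p mu (Suc ?k))
      = nat (int (p (?k + 1)) - mu ?k) + nat (int (p (Suc ?k + 1)) - mu (Suc ?k))"
    using k row_degrees_first_failure antitone[of "Suc ?k"]
    by (auto simp: exchange_rows_apply fails_interlacing_def)
  then have "?w (exchange_rows N p mu) ?k * ?w (exchange_rows N p mu) (Suc ?k) = ?w mu ?k * ?w mu (Suc ?k)"
    by (simp add: power_add[symmetric])
  moreover have "prod (?w (exchange_rows N p mu)) R = prod (?w mu) R"
    by (intro prod.cong) (auto simp: R_def exchange_rows_apply)
  ultimately show ?thesis
    unfolding shift_weight_def split[of "?w _"] by simp
qed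

end

lemma hom_mat_exchange_rows:
  assumes "\<exists>i. fails_interlacing N p mu i"
  shows "hom_mat (Suc N) N (exchange_rows N p mu) x =
    swaprows (first_failure N p mu) (Suc (first_failure N p mu)) (hom_mat (Suc N) N mu x)"
  using first_failure(2)[OF assms]
  by (intro eq_matI) (auto simp: hom_mat_def exchange_rows_apply algebra_simps)

lemma det_hom_mat_exchange_rows:
  assumes "\<exists>i. fails_interlacing N p mu i"
  shows "det (hom_mat (Suc N) N (exchange_rows N p mu) x) = - det (hom_mat (Suc N) N mu x)"
  unfolding hom_mat_exchange_rows[OF assms]
  using first_failure(2)[OF assms] by (intro det_swaprows[of _ "Suc N"]) (auto simp: hom_mat_def)

lemma det_hom_mat_exchange_rows_fixed:
  assumes fails: "\<exists>i. fails_interlacing N p mu i" and fixed: "exchange_rows N p mu = mu"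
  shows "det (hom_mat (Suc N) N mu x) = 0"
proof -
  let ?k = "first_failure N p mu"
  have k: "?k < N"
    using first_failure(2)[OF fails] .
  have "mu (Suc ?k) - 1 = mu ?k"
    using exchange_rows_apply(1)[of N p mu] fixed by simp
  then have "row (hom_mat (Suc N) N mu x) ?k = row (hom_mat (Suc N) N mu x) (Suc ?k)"
    using k by (intro eq_vecI) (auto simp: hom_mat_def row_def algebra_simps)
  then show ?thesis
    using k by (intro det_identical_rows[of _ "Suc N" ?k "Suc ?k"]) (auto simp: hom_mat_def)
qed

lemma sum_fails_interlacing_eq_0:
  assumes antitone: "\<And>j. j \<ge> 1 \<Longrightarrow> p (Suc j) \<le> p j"
  shows "(\<Sum>mu\<in>{mu \<in> PiE {0..<Suc N} (row_degrees N p). \<exists>i. fails_interlacing N p mu i}.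
      shift_weight N p x mu * det (hom_mat (Suc N) N mu x)) = 0"
proof -
  let ?B = "{mu \<in> PiE {0..<Suc N} (row_degrees N p). \<exists>i. fails_interlacing N p mu i}"
  let ?f = "\<lambda>mu. shift_weight N p x mu * det (hom_mat (Suc N) N mu x)"
  have "finite ?B"
    by (rule finite_subset[of _ "PiE {0..<Suc N} (row_degrees N p)"]) (auto intro: finite_PiE)
  moreover have "?f mu = 0" if "mu \<in> ?B" "exchange_rows N p mu = mu" for mu
    using that det_hom_mat_exchange_rows_fixed[of N p mu x] by auto
  ultimately have "sum ?f ?B = sum ?f {mu \<in> ?B. exchange_rows N p mu \<noteq> mu}"
    by (intro sum.mono_neutral_right) auto
  also have "\<dots> = 0"
  proof (rule sum_involution_eq_0[where h = "exchange_rows N p"])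
    fix mu assume "mu \<in> {mu \<in> ?B. exchange_rows N p mu \<noteq> mu}"
    then have fails: "\<exists>i. fails_interlacing N p mu i"
      and mu: "mu \<in> PiE {0..<Suc N} (row_degrees N p)" and moved: "exchange_rows N p mu \<noteq> mu"
      by auto
    show "?f (exchange_rows N p mu) + ?f mu = 0"
      using shift_weight_exchange_rows[OF fails mu antitone, of x] det_hom_mat_exchange_rows[OF fails, of x]
      by simp
    show "exchange_rows N p (exchange_rows N p mu) = mu"
      using exchange_rows_involution[OF fails mu] .
    then show "exchange_rows N p mu \<in> {mu \<in> ?B. exchange_rows N p mu \<noteq> mu}"
      using exchange_rows_row_degrees[OF fails mu antitone] fails_interlacing_exchange_rows[OF fails mu]
        moved by auto
  qed (simp_all)
  finally show ?thesis .
qed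

text \<open>Shapes \<open>q\<close> obtained from \<open>p\<close> (with at most \<open>N + 1\<close> rows) by removing a horizontal strip.\<close>
definition interlacing :: "nat \<Rightarrow> (nat \<Rightarrow> nat) \<Rightarrow> (nat \<Rightarrow> nat) set" where
  "interlacing N p = {q. q 0 = 0 \<and> (\<forall>j>Suc N. q j = 0) \<and> (\<forall>j\<in>{1..Suc N}. p (Suc j) \<le> q j \<and> q j \<le> p j)}"

lemma interlacingD:
  assumes q: "q \<in> interlacing N p" and supp: "\<And>j. j > Suc N \<Longrightarrow> p j = 0"
  shows "q 0 = 0" "\<And>j. j > Suc N \<Longrightarrow> q j = 0"
    "\<And>j. j \<ge> 1 \<Longrightarrow> p (Suc j) \<le> q j" "\<And>j. j \<ge> 1 \<Longrightarrow> q j \<le> p j"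
proof -
  show "q 0 = 0" "\<And>j. j > Suc N \<Longrightarrow> q j = 0"
    using q by (simp_all add: interlacing_def)
  fix j :: nat assume "j \<ge> 1"
  then show "p (Suc j) \<le> q j" "q j \<le> p j"
    using q supp[of "Suc j"] by (cases "j \<le> Suc N"; auto simp: interlacing_def)+
qed

lemma finite_interlacing: "finite (interlacing N p)"
proof (rule finite_subset)
  let ?M = "Max (p ` {0..Suc N})"
  show "interlacing N p \<subseteq> {q. \<forall>j. (j \<in> {0..Suc N} \<longrightarrow> q j \<in> {0..?M}) \<and> (j \<notin> {0..Suc N} \<longrightarrow> q j = 0)}"
  proof (intro subsetI CollectI allI conjI impI)
    fix q j assume q: "q \<in> interlacing N p"
    assume j: "j \<in> {0..Suc N}"
    then have "q j \<le> p j"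
      using q by (cases "j = 0") (auto simp: interlacing_def)
    also have "p j \<le> ?M"
      using j by (intro Max_ge) auto
    finally show "q j \<in> {0..?M}" by simp
  next
    fix q j assume "q \<in> interlacing N p" "j \<notin> {0..Suc N}"
    then show "q j = 0" by (auto simp: interlacing_def)
  qed
qed (rule finite_set_of_finite_funs; simp)

lemma nonneg_if_interlacing:
  assumes mu: "mu \<in> PiE {0..<Suc N} (row_degrees N p)"
    and good: "\<not> (\<exists>i. fails_interlacing N p mu i)" and i: "i < Suc N"
  shows "mu i \<ge> 0"
proof (cases "i < N")
  case True
  then show ?thesis
    using good by (auto simp: fails_interlacing_def)
next
  case False
  then have "i = N"
    using i by simp
  moreover have "mu N \<in> row_degrees N p N"
    using mu by (auto simp: PiE_iff)
  ultimately show ?thesis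
    by (simp add: row_degrees_def)
qed

lemma sum_interlacing_eq_sum_shifts:
  assumes supp: "\<And>j. j > Suc N \<Longrightarrow> p j = 0"
  shows "(\<Sum>q\<in>interlacing N p. x (Suc N) ^ (\<Sum>j\<in>{0..<Suc N}. p (j + 1) - q (j + 1)) *
        det (hom_mat (Suc N) N (\<lambda>j. int (q (j + 1))) x))
    = (\<Sum>mu\<in>{mu \<in> PiE {0..<Suc N} (row_degrees N p). \<not> (\<exists>i. fails_interlacing N p mu i)}.
        shift_weight N p x mu * det (hom_mat (Suc N) N mu x))"
proof (rule sum.reindex_bij_witness[where j = "\<lambda>q. restrict (\<lambda>j. int (q (Suc j))) {0..<Suc N}"
      and i = "\<lambda>mu j. if 1 \<le> j \<and> j \<le> Suc N then nat (mu (j - 1)) else 0"])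
  fix mu assume "mu \<in> {mu \<in> PiE {0..<Suc N} (row_degrees N p). \<not> (\<exists>i. fails_interlacing N p mu i)}"
  then have mu: "mu \<in> PiE {0..<Suc N} (row_degrees N p)" and good: "\<And>i. \<not> fails_interlacing N p mu i"
    by auto
  have nonneg: "mu i \<ge> 0" if "i < Suc N" for i
    using nonneg_if_interlacing[OF mu] good that by blast
  show "restrict (\<lambda>j. int ((\<lambda>j. if 1 \<le> j \<and> j \<le> Suc N then nat (mu (j - 1)) else 0) (Suc j))) {0..<Suc N} = mu"
    using mu nonneg by (auto simp: fun_eq_iff PiE_iff extensional_def)
  show "(\<lambda>j. if 1 \<le> j \<and> j \<le> Suc N then nat (mu (j - 1)) else 0) \<in> interlacing N p"
    unfolding interlacing_def
  proof (intro CollectI conjI allI impI ballI)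
    fix j assume j: "j \<in> {1..Suc N}"
    then show "p (Suc j) \<le> (if 1 \<le> j \<and> j \<le> Suc N then nat (mu (j - 1)) else 0)"
      using good[of "j - 1"] nonneg[of "j - 1"] supp[of "Suc (Suc N)"]
      by (cases "j = Suc N") (auto simp: fails_interlacing_def)
    have "mu (j - 1) \<in> row_degrees N p (j - 1)" using mu j by (auto simp: PiE_iff)
    then show "(if 1 \<le> j \<and> j \<le> Suc N then nat (mu (j - 1)) else 0) \<le> p j"
      using j by (auto simp: row_degrees_def)
  qed auto
next
  fix q assume q: "q \<in> interlacing N p"
  note qD = interlacingD[OF q supp]
  show "(\<lambda>j. if 1 \<le> j \<and> j \<le> Suc N then nat (restrict (\<lambda>j. int (q (Suc j))) {0..<Suc N} (j - 1)) else 0) = q"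
    using qD(1,2) by (auto simp: fun_eq_iff not_le)
  have "restrict (\<lambda>j. int (q (Suc j))) {0..<Suc N} \<in> PiE {0..<Suc N} (row_degrees N p)"
    using qD(4) by (auto simp: PiE_iff row_degrees_def)
  moreover have "\<not> fails_interlacing N p (restrict (\<lambda>j. int (q (Suc j))) {0..<Suc N}) i" for i
    using qD(3)[of "Suc i"] by (auto simp: fails_interlacing_def)
  ultimately show "restrict (\<lambda>j. int (q (Suc j))) {0..<Suc N}
      \<in> {mu \<in> PiE {0..<Suc N} (row_degrees N p). \<not> (\<exists>i. fails_interlacing N p mu i)}"
    by blast
  have "hom_mat (Suc N) N (restrict (\<lambda>j. int (q (Suc j))) {0..<Suc N}) x = hom_mat (Suc N) N (\<lambda>j. int (q (j + 1))) x"
    by (rule hom_mat_cong) simp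
  moreover have "shift_weight N p x (restrict (\<lambda>j. int (q (Suc j))) {0..<Suc N})
      = x (Suc N) ^ (\<Sum>j\<in>{0..<Suc N}. p (j + 1) - q (j + 1))"
    unfolding shift_weight_def power_sum by (simp add: nat_minus_as_int)
  ultimately show "shift_weight N p x (restrict (\<lambda>j. int (q (Suc j))) {0..<Suc N}) *
      det (hom_mat (Suc N) N (restrict (\<lambda>j. int (q (Suc j))) {0..<Suc N}) x)
    = x (Suc N) ^ (\<Sum>j\<in>{0..<Suc N}. p (j + 1) - q (j + 1)) * det (hom_mat (Suc N) N (\<lambda>j. int (q (j + 1))) x)"
    by simp
qed

lemma det_hom_mat_Suc_interlacing:
  assumes antitone: "\<And>j. j \<ge> 1 \<Longrightarrow> p (Suc j) \<le> p j"
    and supp: "\<And>j. j > Suc N \<Longrightarrow> p j = 0"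
  shows "det (hom_mat (Suc N) (Suc N) (\<lambda>j. int (p (j + 1))) x) =
    (\<Sum>q\<in>interlacing N p. x (Suc N) ^ (\<Sum>j\<in>{0..<Suc N}. p (j + 1) - q (j + 1)) *
       det (hom_mat (Suc N) N (\<lambda>j. int (q (j + 1))) x))"
proof -
  let ?P = "PiE {0..<Suc N} (row_degrees N p)"
  let ?G = "{mu \<in> ?P. \<not> (\<exists>i. fails_interlacing N p mu i)}"
  let ?B = "{mu \<in> ?P. \<exists>i. fails_interlacing N p mu i}"
  let ?f = "\<lambda>mu. shift_weight N p x mu * det (hom_mat (Suc N) N mu x)"
  have fin: "finite ?P"
    by (auto intro: finite_PiE)
  have "det (hom_mat (Suc N) (Suc N) (\<lambda>j. int (p (j + 1))) x) = sum ?f ?P"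
    by (rule det_hom_mat_Suc)
  also have "?P = ?G \<union> ?B"
    by auto
  also have "sum ?f (?G \<union> ?B) = sum ?f ?G + sum ?f ?B"
    by (rule sum.union_disjoint) (use fin in auto)
  also have "sum ?f ?B = 0"
    using antitone by (rule sum_fails_interlacing_eq_0)
  also have "sum ?f ?G + 0 = (\<Sum>q\<in>interlacing N p.
      x (Suc N) ^ (\<Sum>j\<in>{0..<Suc N}. p (j + 1) - q (j + 1)) * det (hom_mat (Suc N) N (\<lambda>j. int (q (j + 1))) x))"
    using sum_interlacing_eq_sum_shifts[of N p x, OF supp] by simp
  finally show ?thesis .
qed

text \<open>The notions of \<open>Defs\<close> for a shape given by its part function (\<open>p j\<close> is the length of
  row \<open>j \<ge> 1\<close>), so that the shapes occurring in the induction need not come from lists.\<close>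
definition diagram :: "(nat \<Rightarrow> nat) \<Rightarrow> (nat \<times> nat) set" where
  "diagram p = {(i, j). 1 \<le> i \<and> 1 \<le> j \<and> j \<le> p i}"

definition tableaux :: "(nat \<Rightarrow> nat) \<Rightarrow> nat \<Rightarrow> (nat \<times> nat \<Rightarrow> nat) set" where
  "tableaux p N = {T.
     (\<forall>c. c \<notin> diagram p \<longrightarrow> T c = 0) \<and>
     (\<forall>c\<in>diagram p. T c \<in> {1..N}) \<and>
     (\<forall>i j. (i, j) \<in> diagram p \<and> (i, Suc j) \<in> diagram p \<longrightarrow> T (i, j) \<le> T (i, Suc j)) \<and>
     (\<forall>i j. (i, j) \<in> diagram p \<and> (Suc i, j) \<in> diagram p \<longrightarrow> T (i, j) < T (Suc i, j))}"

definition schur_fun :: "(nat \<Rightarrow> nat) \<Rightarrow> nat \<Rightarrow> (nat \<Rightarrow> 'a::comm_ring_1) \<Rightarrow> 'a" where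
  "schur_fun p N x = (\<Sum>T\<in>tableaux p N. \<Prod>c\<in>diagram p. x (T c))"

lemma diagram_eq_Sigma:
  assumes "\<And>j. j > n \<Longrightarrow> p j = 0"
  shows "diagram p = Sigma {1..n} (\<lambda>i. {1..p i})"
  using assms unfolding diagram_def by (force simp: not_le[symmetric])

lemma finite_diagram:
  assumes "\<And>j. j > n \<Longrightarrow> p j = 0"
  shows "finite (diagram p)"
  using diagram_eq_Sigma[OF assms] by simp

lemma diagram_mono: "(\<And>j. j \<ge> 1 \<Longrightarrow> q j \<le> p j) \<Longrightarrow> diagram q \<subseteq> diagram p"
  unfolding diagram_def by (auto intro: order_trans)

lemma finite_tableaux:
  assumes "finite (diagram p)"
  shows "finite (tableaux p N)"
proof (rule finite_subset[OF _ finite_set_of_finite_funs[OF assms, of "{1..N}" 0]])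
  show "tableaux p N \<subseteq> {f. \<forall>c. (c \<in> diagram p \<longrightarrow> f c \<in> {1..N}) \<and> (c \<notin> diagram p \<longrightarrow> f c = 0)}"
    unfolding tableaux_def by blast
qed simp

lemma tableau_row_mono:
  assumes T: "T \<in> tableaux p N" and "(i, c) \<in> diagram p" and "(i, c + k) \<in> diagram p"
  shows "T (i, c) \<le> T (i, c + k)"
  using assms(3)
proof (induction k)
  case (Suc k)
  then have "(i, c + k) \<in> diagram p"
    using assms(2) by (auto simp: diagram_def)
  then show ?case
    using Suc assms(2) T unfolding tableaux_def by (fastforce intro: order_trans)
qed simp

lemma tableau_row_le_entry:
  assumes antitone: "\<And>j. j \<ge> 1 \<Longrightarrow> p (Suc j) \<le> p j" and T: "T \<in> tableaux p N"
  shows "(i, c) \<in> diagram p \<Longrightarrow> i \<le> T (i, c)"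
proof (induction i)
  case (Suc i)
  show ?case
  proof (cases "i = 0")
    case True
    then show ?thesis using T Suc.prems unfolding tableaux_def by auto
  next
    case False
    then have ic: "(i, c) \<in> diagram p"
      using Suc.prems antitone[of i] by (auto simp: diagram_def)
    then have "i \<le> T (i, c)"
      by (rule Suc.IH)
    also have "T (i, c) < T (Suc i, c)"
      using T ic Suc.prems unfolding tableaux_def by auto
    finally show ?thesis by simp
  qed
qed simp

lemma tableaux_empty_if_too_many_rows:
  assumes "\<And>j. j \<ge> 1 \<Longrightarrow> p (Suc j) \<le> p j" and "p (Suc N) \<noteq> 0"
  shows "tableaux p N = {}"
proof (rule ccontr)
  assume "tableaux p N \<noteq> {}"
  then obtain T where T: "T \<in> tableaux p N" by blast
  have c: "(Suc N, 1) \<in> diagram p"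
    using assms(2) by (auto simp: diagram_def)
  then have "Suc N \<le> T (Suc N, 1)"
    using tableau_row_le_entry[OF assms(1) T] by blast
  moreover have "T (Suc N, 1) \<in> {1..N}"
    using T c unfolding tableaux_def by blast
  ultimately show False by simp
qed

lemma downclosed_eq_atLeastAtMost_card:
  fixes S :: "nat set"
  assumes "S \<subseteq> {1..n}" and downclosed: "\<And>c c'. c' \<in> S \<Longrightarrow> 1 \<le> c \<Longrightarrow> c \<le> c' \<Longrightarrow> c \<in> S"
  shows "S = {1..card S}"
proof (cases "S = {}")
  case False
  have fin: "finite S"
    using assms(1) finite_subset by blast
  have "S = {1..Max S}"
  proof
    show "S \<subseteq> {1..Max S}"
      using assms(1) fin by auto
    show "{1..Max S} \<subseteq> S"
      using downclosed[of "Max S"] Max_in[OF fin False] by auto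
  qed
  then show ?thesis
    by (metis card_atLeastAtMost diff_Suc_1)
qed simp

definition subshape :: "(nat \<Rightarrow> nat) \<Rightarrow> nat \<Rightarrow> (nat \<times> nat \<Rightarrow> nat) \<Rightarrow> nat \<Rightarrow> nat" where
  "subshape p N T i = (if i = 0 then 0 else card {c \<in> {1..p i}. T (i, c) \<le> N})"

lemma subshape_le: "subshape p N T i \<le> p i"
proof -
  have "card {c \<in> {1..p i}. T (i, c) \<le> N} \<le> card {1..p i}"
    by (rule card_mono) auto
  then show ?thesis
    by (simp add: subshape_def)
qed

lemma tableau_entry_le_iff:
  assumes T: "T \<in> tableaux p (Suc N)" and c: "(i, c) \<in> diagram p"
  shows "T (i, c) \<le> N \<longleftrightarrow> (i, c) \<in> diagram (subshape p N T)"
proof -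
  have i: "i \<ge> 1" and c: "1 \<le> c" "c \<le> p i"
    using c by (auto simp: diagram_def)
  define S where "S = {c \<in> {1..p i}. T (i, c) \<le> N}"
  have "S = {1..card S}"
    unfolding S_def
  proof (rule downclosed_eq_atLeastAtMost_card[of _ "p i"])
    fix c c' assume c': "c' \<in> {c \<in> {1..p i}. T (i, c) \<le> N}" and "1 \<le> c" "c \<le> c'"
    moreover have "T (i, c) \<le> T (i, c + (c' - c))"
      by (rule tableau_row_mono[OF T]) (use calculation i in \<open>auto simp: diagram_def\<close>)
    ultimately show "c \<in> {c \<in> {1..p i}. T (i, c) \<le> N}"
      by auto
  qed auto
  then have "c \<in> S \<longleftrightarrow> 1 \<le> c \<and> c \<le> card S"
    by (metis atLeastAtMost_iff)
  moreover have "T (i, c) \<le> N \<longleftrightarrow> c \<in> S"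
    using c by (simp add: S_def)
  moreover have "subshape p N T i = card S"
    using i by (simp add: subshape_def S_def)
  ultimately show ?thesis
    using i by (simp add: diagram_def)
qed

lemma subshape_interlacing:
  assumes antitone: "\<And>j. j \<ge> 1 \<Longrightarrow> p (Suc j) \<le> p j"
    and supp: "\<And>j. j > Suc N \<Longrightarrow> p j = 0"
    and T: "T \<in> tableaux p (Suc N)"
  shows "subshape p N T \<in> interlacing N p"
  unfolding interlacing_def
proof (intro CollectI conjI allI impI ballI)
  fix j assume j: "j \<in> {1..Suc N}"
  have "{1..p (Suc j)} \<subseteq> {c \<in> {1..p j}. T (j, c) \<le> N}"
  proof
    fix c assume c: "c \<in> {1..p (Suc j)}"
    have pj: "p (Suc j) \<le> p j"
      using antitone j by auto
    have "T (j, c) < T (Suc j, c)" "T (Suc j, c) \<le> Suc N"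
      using T c j pj unfolding tableaux_def diagram_def by auto
    then show "c \<in> {c \<in> {1..p j}. T (j, c) \<le> N}"
      using c pj by auto
  qed
  then have "card {1..p (Suc j)} \<le> card {c \<in> {1..p j}. T (j, c) \<le> N}"
    by (rule card_mono[rotated]) auto
  then show "p (Suc j) \<le> subshape p N T j"
    using j by (simp add: subshape_def)
  show "subshape p N T j \<le> p j"
    by (rule subshape_le)
qed (auto simp: subshape_def supp)

definition fill_strip ::
    "(nat \<Rightarrow> nat) \<Rightarrow> (nat \<Rightarrow> nat) \<Rightarrow> nat \<Rightarrow> (nat \<times> nat \<Rightarrow> nat) \<Rightarrow> nat \<times> nat \<Rightarrow> nat" where
  "fill_strip p q N T c = (if c \<in> diagram q then T c else if c \<in> diagram p then Suc N else 0)"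

definition restrict_diagram :: "(nat \<Rightarrow> nat) \<Rightarrow> (nat \<times> nat \<Rightarrow> nat) \<Rightarrow> nat \<times> nat \<Rightarrow> nat" where
  "restrict_diagram q T c = (if c \<in> diagram q then T c else 0)"

lemma fill_strip_tableau:
  assumes q: "q \<in> interlacing N p" and supp: "\<And>j. j > Suc N \<Longrightarrow> p j = 0"
    and T: "T \<in> tableaux q N"
  shows "fill_strip p q N T \<in> tableaux p (Suc N)"
proof -
  note qD = interlacingD[OF q supp]
  have sub: "diagram q \<subseteq> diagram p"
    using qD(4) by (rule diagram_mono)
  from T have v: "\<And>c. c \<in> diagram q \<Longrightarrow> T c \<in> {1..N}"
    and row: "\<And>i j. (i, j) \<in> diagram q \<Longrightarrow> (i, Suc j) \<in> diagram q \<Longrightarrow> T (i, j) \<le> T (i, Suc j)"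
    and col: "\<And>i j. (i, j) \<in> diagram q \<Longrightarrow> (Suc i, j) \<in> diagram q \<Longrightarrow> T (i, j) < T (Suc i, j)"
    unfolding tableaux_def by auto
  show ?thesis
    unfolding tableaux_def
  proof (intro CollectI conjI allI impI ballI)
    fix c assume "c \<notin> diagram p"
    then show "fill_strip p q N T c = 0"
      using sub by (auto simp: fill_strip_def)
  next
    fix c assume "c \<in> diagram p"
    then show "fill_strip p q N T c \<in> {1..Suc N}"
      using v[of c] by (auto simp: fill_strip_def)
  next
    fix i j assume ij: "(i, j) \<in> diagram p \<and> (i, Suc j) \<in> diagram p"
    show "fill_strip p q N T (i, j) \<le> fill_strip p q N T (i, Suc j)"
    proof (cases "(i, Suc j) \<in> diagram q")
      case True
      then have "(i, j) \<in> diagram q"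
        using ij by (auto simp: diagram_def)
      then show ?thesis
        using True row by (simp add: fill_strip_def)
    next
      case False
      then show ?thesis
        using ij v[of "(i, j)"] by (auto simp: fill_strip_def)
    qed
  next
    fix i j assume ij: "(i, j) \<in> diagram p \<and> (Suc i, j) \<in> diagram p"
    then have "(i, j) \<in> diagram q"
      using qD(3)[of i] by (auto simp: diagram_def)
    then show "fill_strip p q N T (i, j) < fill_strip p q N T (Suc i, j)"
      using ij col v[of "(i, j)"] by (cases "(Suc i, j) \<in> diagram q") (auto simp: fill_strip_def)
  qed
qed

lemma subshape_fill_strip:
  assumes q: "q \<in> interlacing N p" and supp: "\<And>j. j > Suc N \<Longrightarrow> p j = 0"
    and T: "T \<in> tableaux q N"
  shows "subshape p N (fill_strip p q N T) = q"
proof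
  fix i
  note qD = interlacingD[OF q supp]
  show "subshape p N (fill_strip p q N T) i = q i"
  proof (cases "i = 0")
    case False
    have "(i, c) \<in> diagram q \<Longrightarrow> T (i, c) \<le> N" for c
      using T unfolding tableaux_def by auto
    then have "{c \<in> {1..p i}. fill_strip p q N T (i, c) \<le> N} = {1..q i}"
      using False qD(4)[of i] by (auto simp: fill_strip_def diagram_def)
    then show ?thesis
      using False by (simp add: subshape_def)
  qed (simp add: subshape_def qD(1))
qed

lemma prod_fill_strip:
  assumes sub: "diagram q \<subseteq> diagram p" and fin: "finite (diagram p)"
  shows "(\<Prod>c\<in>diagram p. x (fill_strip p q N T c)) =
    x (Suc N) ^ card (diagram p - diagram q) * (\<Prod>c\<in>diagram q. x (T c))"
proof -
  have "(\<Prod>c\<in>diagram p. x (fill_strip p q N T c)) =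
      (\<Prod>c\<in>diagram p - diagram q. x (fill_strip p q N T c)) * (\<Prod>c\<in>diagram q. x (fill_strip p q N T c))"
    by (rule prod.subset_diff[OF sub fin])
  also have "(\<Prod>c\<in>diagram p - diagram q. x (fill_strip p q N T c)) = (\<Prod>c\<in>diagram p - diagram q. x (Suc N))"
    by (rule prod.cong) (auto simp: fill_strip_def)
  also have "(\<Prod>c\<in>diagram q. x (fill_strip p q N T c)) = (\<Prod>c\<in>diagram q. x (T c))"
    by (rule prod.cong) (auto simp: fill_strip_def)
  finally show ?thesis
    by simp
qed

lemma restrict_diagram_tableau:
  assumes T: "T \<in> tableaux p (Suc N)"
  shows "restrict_diagram (subshape p N T) T \<in> tableaux (subshape p N T) N"
proof -
  let ?q = "subshape p N T"
  have sub: "diagram ?q \<subseteq> diagram p"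
    by (rule diagram_mono) (rule subshape_le)
  from T have v: "\<And>c. c \<in> diagram p \<Longrightarrow> T c \<in> {1..Suc N}"
    and row: "\<And>i j. (i, j) \<in> diagram p \<Longrightarrow> (i, Suc j) \<in> diagram p \<Longrightarrow> T (i, j) \<le> T (i, Suc j)"
    and col: "\<And>i j. (i, j) \<in> diagram p \<Longrightarrow> (Suc i, j) \<in> diagram p \<Longrightarrow> T (i, j) < T (Suc i, j)"
    unfolding tableaux_def by auto
  show ?thesis
    unfolding tableaux_def
  proof (intro CollectI conjI allI impI ballI)
    fix c assume "c \<in> diagram ?q"
    moreover obtain i j where "c = (i, j)"
      by fastforce
    ultimately show "restrict_diagram ?q T c \<in> {1..N}"
      using sub v[of c] tableau_entry_le_iff[OF T, of i j] by (auto simp: restrict_diagram_def)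
  next
    fix i j assume "(i, j) \<in> diagram ?q \<and> (i, Suc j) \<in> diagram ?q"
    then show "restrict_diagram ?q T (i, j) \<le> restrict_diagram ?q T (i, Suc j)"
      using sub row by (auto simp: restrict_diagram_def)
  next
    fix i j assume "(i, j) \<in> diagram ?q \<and> (Suc i, j) \<in> diagram ?q"
    then show "restrict_diagram ?q T (i, j) < restrict_diagram ?q T (Suc i, j)"
      using sub col by (auto simp: restrict_diagram_def)
  qed (simp add: restrict_diagram_def)
qed

lemma fill_strip_restrict_diagram:
  assumes T: "T \<in> tableaux p (Suc N)"
  shows "fill_strip p (subshape p N T) N (restrict_diagram (subshape p N T) T) = T"
proof
  fix c
  show "fill_strip p (subshape p N T) N (restrict_diagram (subshape p N T) T) c = T c"
  proof (cases "c \<in> diagram p")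
    case True
    then have "T c \<in> {1..Suc N}"
      using T unfolding tableaux_def by auto
    then show ?thesis
      using True tableau_entry_le_iff[OF T, of "fst c" "snd c"]
      by (auto simp: fill_strip_def restrict_diagram_def)
  next
    case False
    moreover have "diagram (subshape p N T) \<subseteq> diagram p"
      by (rule diagram_mono) (rule subshape_le)
    moreover have "T c = 0"
      using T False unfolding tableaux_def by blast
    ultimately show ?thesis
      by (auto simp: fill_strip_def restrict_diagram_def)
  qed
qed

lemma sum_tableaux_subshape_eq:
  assumes q: "q \<in> interlacing N p" and supp: "\<And>j. j > Suc N \<Longrightarrow> p j = 0"
  shows "(\<Sum>T\<in>{T \<in> tableaux p (Suc N). subshape p N T = q}. \<Prod>c\<in>diagram p. x (T c)) =
    x (Suc N) ^ card (diagram p - diagram q) * schur_fun q N x"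
proof -
  have sub: "diagram q \<subseteq> diagram p"
    using interlacingD(4)[OF q supp] by (rule diagram_mono)
  have fin: "finite (diagram p)"
    using supp by (rule finite_diagram)
  have "(\<Sum>T'\<in>tableaux q N. x (Suc N) ^ card (diagram p - diagram q) * (\<Prod>c\<in>diagram q. x (T' c)))
      = (\<Sum>T\<in>{T \<in> tableaux p (Suc N). subshape p N T = q}. \<Prod>c\<in>diagram p. x (T c))"
  proof (rule sum.reindex_bij_witness[where j = "fill_strip p q N" and i = "restrict_diagram q"])
    fix T' assume T': "T' \<in> tableaux q N"
    then have "T' c = 0" if "c \<notin> diagram q" for c
      using that unfolding tableaux_def by blast
    then show "restrict_diagram q (fill_strip p q N T') = T'"
      by (auto simp: restrict_diagram_def fill_strip_def)
    show "fill_strip p q N T' \<in> {T \<in> tableaux p (Suc N). subshape p N T = q}"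
      using fill_strip_tableau[OF q supp T'] subshape_fill_strip[OF q supp T'] by simp
    show "(\<Prod>c\<in>diagram p. x (fill_strip p q N T' c)) =
        x (Suc N) ^ card (diagram p - diagram q) * (\<Prod>c\<in>diagram q. x (T' c))"
      by (rule prod_fill_strip[OF sub fin])
  next
    fix T assume "T \<in> {T \<in> tableaux p (Suc N). subshape p N T = q}"
    then have T: "T \<in> tableaux p (Suc N)" and [symmetric, simp]: "subshape p N T = q"
      by auto
    show "fill_strip p q N (restrict_diagram q T) = T"
      using fill_strip_restrict_diagram[OF T] by simp
    show "restrict_diagram q T \<in> tableaux q N"
      using restrict_diagram_tableau[OF T] by simp
  qed
  then show ?thesis
    by (simp add: schur_fun_def sum_distrib_left)
qed

text \<open>Branching rule: the entries \<open>N + 1\<close> of a tableau form a horizontal strip.\<close>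
lemma schur_fun_Suc:
  assumes antitone: "\<And>j. j \<ge> 1 \<Longrightarrow> p (Suc j) \<le> p j"
    and supp: "\<And>j. j > Suc N \<Longrightarrow> p j = 0"
  shows "schur_fun p (Suc N) x =
    (\<Sum>q\<in>interlacing N p. x (Suc N) ^ card (diagram p - diagram q) * schur_fun q N x)"
proof -
  have "finite (tableaux p (Suc N))"
    using finite_diagram[OF supp] by (rule finite_tableaux)
  then have "schur_fun p (Suc N) x = (\<Sum>q\<in>interlacing N p.
      \<Sum>T\<in>{T \<in> tableaux p (Suc N). subshape p N T = q}. \<Prod>c\<in>diagram p. x (T c))"
    unfolding schur_fun_def
    by (rule sum.group[symmetric, OF _ finite_interlacing])
       (use subshape_interlacing[of p N, OF antitone supp] in auto)
  also have "\<dots> = (\<Sum>q\<in>interlacing N p. x (Suc N) ^ card (diagram p - diagram q) * schur_fun q N x)"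
    using sum_tableaux_subshape_eq[of _ N p x, OF _ supp] by (intro sum.cong) auto
  finally show ?thesis .
qed

lemma card_diagram_diff_interlacing:
  assumes supp: "\<And>j. j > Suc N \<Longrightarrow> p j = 0" and q: "q \<in> interlacing N p"
  shows "card (diagram p - diagram q) = (\<Sum>j\<in>{0..<Suc N}. p (j + 1) - q (j + 1))"
proof -
  note qD = interlacingD[OF q supp]
  have sub: "diagram q \<subseteq> diagram p"
    using qD(4) by (rule diagram_mono)
  have "card (diagram p - diagram q) = card (diagram p) - card (diagram q)"
    using finite_subset[OF sub finite_diagram[of "Suc N" p, OF supp]] sub by (rule card_Diff_subset)
  also have "\<dots> = (\<Sum>j\<in>{1..Suc N}. p j) - (\<Sum>j\<in>{1..Suc N}. q j)"
    using diagram_eq_Sigma[OF supp] diagram_eq_Sigma[of "Suc N" q] qD(2) by (simp add: card_SigmaI)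
  also have "\<dots> = (\<Sum>j\<in>{1..Suc N}. p j - q j)"
    by (rule sum_subtractf_nat[symmetric]) (use qD(4) in auto)
  also have "\<dots> = (\<Sum>j\<in>{0..<Suc N}. p (j + 1) - q (j + 1))"
    by (rule sum.reindex_bij_witness[where j = "\<lambda>j. j - 1" and i = "\<lambda>j. j + 1"]) auto
  finally show ?thesis .
qed

lemma antitone_interlacing:
  assumes "q \<in> interlacing N p" and "\<And>j. j > Suc N \<Longrightarrow> p j = 0" and "j \<ge> 1"
  shows "q (Suc j) \<le> q j"
  using interlacingD(3,4)[OF assms(1,2)] assms(3) by (meson le_SucI order_trans)

lemma schur_fun_eq_det_hom_mat:
  assumes "\<And>j. j \<ge> 1 \<Longrightarrow> p (Suc j) \<le> p j" and "\<And>j. j > N \<Longrightarrow> p j = 0"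
  shows "schur_fun p N x = det (hom_mat N N (\<lambda>j. int (p (j + 1))) x)"
  using assms
proof (induction N arbitrary: p)
  case 0
  then have "diagram p = {}"
    by (auto simp: diagram_def)
  moreover from this have "tableaux p 0 = {\<lambda>_. 0}"
    unfolding tableaux_def by auto
  ultimately show ?case
    by (simp add: schur_fun_def hom_mat_def det_def)
next
  case (Suc N)
  have "schur_fun q N x = det (hom_mat (Suc N) N (\<lambda>j. int (q (j + 1))) x)" if q: "q \<in> interlacing N p" for q
  proof (cases "q (Suc N) = 0")
    case True
    have "q j = 0" if "j > N" for j
      using interlacingD(2)[OF q Suc.prems(2)] True that by (cases "j = Suc N") auto
    then show ?thesis
      using Suc.IH antitone_interlacing[OF q Suc.prems(2)] True det_hom_mat_last_column[of N q x]
      by simp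
  next
    case False
    then show ?thesis
      using tableaux_empty_if_too_many_rows antitone_interlacing[OF q Suc.prems(2)]
        det_hom_mat_last_column[of N q x]
      by (simp add: schur_fun_def)
  qed
  then have "schur_fun p (Suc N) x = (\<Sum>q\<in>interlacing N p.
      x (Suc N) ^ (\<Sum>j\<in>{0..<Suc N}. p (j + 1) - q (j + 1)) * det (hom_mat (Suc N) N (\<lambda>j. int (q (j + 1))) x))"
    using Suc.prems card_diagram_diff_interlacing[of N p] by (simp add: schur_fun_Suc)
  also have "\<dots> = det (hom_mat (Suc N) (Suc N) (\<lambda>j. int (p (j + 1))) x)"
    using Suc.prems by (rule det_hom_mat_Suc_interlacing[symmetric])
  finally show ?case .
qed

lemma diagram_part: "diagram (part lam) = cells lam"
  unfolding cells_def diagram_def part_def by (auto split: if_splits)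

lemma antitone_part:
  assumes "is_partition lam" and "j \<ge> 1"
  shows "part lam (Suc j) \<le> part lam j"
proof (cases "Suc j \<le> length lam")
  case True
  have "sorted (rev lam)"
    using assms(1) by (simp add: is_partition_def)
  then have "lam ! j \<le> lam ! (j - 1)"
    by (rule sorted_rev_nth_mono) (use True in auto)
  then show ?thesis
    using True assms(2) by (simp add: part_def)
qed (simp add: part_def)

theorem proposition6p1:
  fixes N :: nat and lam :: "nat list" and x :: "nat \<Rightarrow> 'a::comm_ring_1"
  assumes "is_partition lam" and "length lam \<le> N"
  shows "schur lam N x =
    det (mat N N (\<lambda>(j, k). hom (int (part lam (j + 1)) - int (j + 1) + int (k + 1))
                               {k + 1..N} x))"
proof -
  have "schur lam N x = schur_fun (part lam) N x"
    unfolding schur_def schur_fun_def ssyt_def tableaux_def diagram_part ..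
  also have "\<dots> = det (hom_mat N N (\<lambda>j. int (part lam (j + 1))) x)"
    using antitone_part[OF assms(1)] assms(2)
    by (intro schur_fun_eq_det_hom_mat) (auto simp: part_def)
  finally show ?thesis
    unfolding hom_mat_def .
qed

end
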